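(* Let $N\ge2$, $t,r\ge1$, $m=t+r<N$, $K\ge N$, and let $n_0=K-(N-t)+1$. Fix $y\in(0,1]$ and, for $s\ge0$, consider the family of densities on $(0,1]$ $$g_s(x)=f_\beta(x;n_0,r,0)\,e^{-s xy}\sum_{k=0}^{n_0}\binom{n_0}{k}\frac{(r-1)!}{(r+k-1)!}[s\,y(1-x)]^k,$$ which is the conditional pdf of $p_1$ given $p_2=y$ when $\mathrm{SINR}=s$ (with $s=0$ corresponding to $H_0$). Then for every $s>0$ the likelihood ratio $g_s(x)/g_0(x)$ is a nonincreasing function of $x\in(0,1]$; consequently, conditionally on $p_2$, the test that decides $H_1$ when $p_1<\eta$ (equivalently, when $(1-p_1)/p_1>\eta'$) is uniformly most powerful for testing $\mathrm{SINR}=0$ against $\mathrm{SINR}>0$ based on $p_1$.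
   Context: $f_\beta(x;n,m,0)=\frac{(n+m-1)!}{(n-1)!(m-1)!}x^{n-1}(1-x)^{m-1}$ is the complex central beta pdf. $p_1=1/\bigl(1+\frac{m_1}{1+m_2}\bigr)$, $p_2=1/(1+m_2)$ where $m_1=\mathbf{z}_{2.3}^\dagger\mathbf{S}_{2.3}^{-1}\mathbf{z}_{2.3}$, $m_2=\mathbf{z}_3^\dagger\mathbf{S}_{33}^{-1}\mathbf{z}_3$, for the primary vector $\mathbf{z}\in\mathbb{C}^N$ partitioned into blocks of sizes $t,r,N-m$ and sample matrix $\mathbf{S}$ partitioned conformably, $\mathbf{z}_{2.3}=\mathbf{z}_2-\mathbf{S}_{23}\mathbf{S}_{33}^{-1}\mathbf{z}_3$, $\mathbf{S}_{2.3}=\mathbf{S}_{22}-\mathbf{S}_{23}\mathbf{S}_{33}^{-1}\mathbf{S}_{32}$; $(p_1,p_2)$ is the (transformed) maximal invariant of the adaptive subspace detection problem with structured interference, whose second component $p_2$ has the same distribution under both hypotheses. *)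

theory Defs
  imports "HOL-Analysis.Analysis"
begin

definition fbeta :: "nat \<Rightarrow> nat \<Rightarrow> real \<Rightarrow> real" where
  "fbeta n m x = fact (n + m - 1) / (fact (n - 1) * fact (m - 1)) * x ^ (n - 1) * (1 - x) ^ (m - 1)"

definition gdens :: "nat \<Rightarrow> nat \<Rightarrow> real \<Rightarrow> real \<Rightarrow> real \<Rightarrow> real" where
  "gdens n0 r y s x = fbeta n0 r x * exp (- s * x * y) *
     (\<Sum>k = 0..n0. real (n0 choose k) * (fact (r - 1) / fact (r + k - 1)) * (s * y * (1 - x)) ^ k)"

end

theory Submission
  imports Defs
begin

text \<open>
  Dividing out the central beta density, the likelihood ratio \<open>g\<^sub>s / g\<^sub>0\<close> is
  \<open>e\<^sup>-\<^sup>s\<^sup>x\<^sup>y\<close> times a polynomial in \<open>s y (1 - x)\<close> with nonnegative coefficients,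
  hence nonincreasing in \<open>x\<close>. A monotone likelihood ratio makes the threshold test
  \<open>p\<^sub>1 < \<eta>\<close> most powerful by the Neyman--Pearson argument: for a suitable cut-off \<open>c\<close>
  the integrand \<open>(\<psi> - \<phi>) (g\<^sub>s - c g\<^sub>0)\<close> is pointwise nonnegative, where \<open>\<psi>\<close> is the
  threshold test and \<open>\<phi>\<close> any competing test of at most the same size. The threshold
  test does not depend on \<open>s\<close>, so it is most powerful against every \<open>s > 0\<close> at once.
\<close>

lemma antimono_on_threshold_value:
  fixes L :: "'a::linorder \<Rightarrow> real"
  assumes "antimono_on A L" and "\<forall>x\<in>A. 0 \<le> L x" and "bdd_above (L ` A)"
  obtains c where "0 \<le> c" and "\<And>x. x \<in> A \<Longrightarrow> x < \<eta> \<Longrightarrow> c \<le> L x"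
    and "\<And>x. x \<in> A \<Longrightarrow> \<eta> \<le> x \<Longrightarrow> L x \<le> c"
proof (cases "A \<inter> {\<eta>..} = {}")
  case True
  then show ?thesis using that[of 0] assms(2) by fastforce
next
  case False
  have bdd: "bdd_above (L ` (A \<inter> {\<eta>..}))"
    using assms(3) by (rule bdd_above_mono) auto
  show ?thesis
  proof (rule that[of "Sup (L ` (A \<inter> {\<eta>..}))"])
    obtain z where "z \<in> A \<inter> {\<eta>..}" using False by blast
    then show "0 \<le> Sup (L ` (A \<inter> {\<eta>..}))"
      using assms(2) cSUP_upper[OF _ bdd] by (meson IntD1 order.trans)
    show "Sup (L ` (A \<inter> {\<eta>..})) \<le> L x" if "x \<in> A" "x < \<eta>" for x
      using False that monotone_onD[OF assms(1)] by (intro cSUP_least) auto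
    show "L x \<le> Sup (L ` (A \<inter> {\<eta>..}))" if "x \<in> A" "\<eta> \<le> x" for x
      using that by (intro cSUP_upper[OF _ bdd]) auto
  qed
qed

lemma set_integral_Int_lessThan:
  fixes f :: "'a::linorder \<Rightarrow> real"
  shows "(LINT x:A \<inter> {..<\<eta>}|M. f x) = (LINT x:A|M. indicator {..<\<eta>} x * f x)"
  unfolding set_lebesgue_integral_def
  by (rule Bochner_Integration.integral_cong) (simp_all add: indicator_inter_arith mult.assoc)

lemma set_integrable_Int_lessThan:
  fixes f :: "'a::linorder \<Rightarrow> real"
  assumes "set_integrable M (A \<inter> {..<\<eta>}) f"
  shows "set_integrable M A (\<lambda>x. indicator {..<\<eta>} x * f x)"
  using assms unfolding set_integrable_def
  by (rule Bochner_Integration.integrable_cong[THEN iffD1, rotated 2])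
     (auto simp: indicator_inter_arith)

theorem antimono_likelihood_ratio_threshold_test_most_powerful:
  fixes f0 f1 L \<phi> :: "'a::linorder \<Rightarrow> real"
  assumes "antimono_on A L" and "\<forall>x\<in>A. 0 \<le> L x" and "bdd_above (L ` A)"
    and "\<forall>x\<in>A. 0 \<le> f0 x" and "\<forall>x\<in>A. f1 x = L x * f0 x"
    and "\<forall>x\<in>A. 0 \<le> \<phi> x \<and> \<phi> x \<le> 1"
    and "set_integrable M A (\<lambda>x. \<phi> x * f0 x)" and "set_integrable M A (\<lambda>x. \<phi> x * f1 x)"
    and "set_integrable M (A \<inter> {..<\<eta>}) f0" and "set_integrable M (A \<inter> {..<\<eta>}) f1"
    and size: "(LINT x:A|M. \<phi> x * f0 x) \<le> (LINT x:A \<inter> {..<\<eta>}|M. f0 x)"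
  shows "(LINT x:A|M. \<phi> x * f1 x) \<le> (LINT x:A \<inter> {..<\<eta>}|M. f1 x)"
proof -
  define \<psi> :: "'a \<Rightarrow> real" where "\<psi> = indicator {..<\<eta>}"
  obtain c where "0 \<le> c" and above: "\<And>x. x \<in> A \<Longrightarrow> x < \<eta> \<Longrightarrow> c \<le> L x"
    and below: "\<And>x. x \<in> A \<Longrightarrow> \<eta> \<le> x \<Longrightarrow> L x \<le> c"
    using antimono_on_threshold_value[OF assms(1-3)] by blast
  have \<psi>0: "set_integrable M A (\<lambda>x. \<psi> x * f0 x)" and \<psi>1: "set_integrable M A (\<lambda>x. \<psi> x * f1 x)"
    unfolding \<psi>_def using assms(9,10) by (simp_all add: set_integrable_Int_lessThan)
  have pointwise: "c * (\<psi> x * f0 x - \<phi> x * f0 x) \<le> \<psi> x * f1 x - \<phi> x * f1 x" if "x \<in> A" for x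
  proof -
    have "0 \<le> (\<psi> x - \<phi> x) * (L x - c)"
      using that assms(6) above[of x] below[of x]
      by (cases "x < \<eta>") (auto simp: \<psi>_def intro: mult_nonneg_nonneg mult_nonneg_nonpos)
    then have "0 \<le> f0 x * ((\<psi> x - \<phi> x) * (L x - c))"
      using that assms(4) by simp
    then show ?thesis using that assms(5) by (simp add: algebra_simps)
  qed
  have "0 \<le> c * ((LINT x:A|M. \<psi> x * f0 x) - (LINT x:A|M. \<phi> x * f0 x))"
    using \<open>0 \<le> c\<close> size by (simp add: \<psi>_def set_integral_Int_lessThan)
  also have "\<dots> = (LINT x:A|M. c * (\<psi> x * f0 x - \<phi> x * f0 x))"
    using set_integral_diff(2)[OF \<psi>0 assms(7)] by simp
  also have "\<dots> \<le> (LINT x:A|M. \<psi> x * f1 x - \<phi> x * f1 x)"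
    using pointwise \<psi>0 \<psi>1 assms(7,8) by (intro set_integral_mono) auto
  also have "\<dots> = (LINT x:A|M. \<psi> x * f1 x) - (LINT x:A|M. \<phi> x * f1 x)"
    using \<psi>1 assms(8) by simp
  finally show ?thesis by (simp add: \<psi>_def set_integral_Int_lessThan)
qed

definition gdens_factor :: "nat \<Rightarrow> nat \<Rightarrow> real \<Rightarrow> real \<Rightarrow> real \<Rightarrow> real" where
  "gdens_factor n0 r y s x = exp (- s * x * y) *
     (\<Sum>k = 0..n0. real (n0 choose k) * (fact (r - 1) / fact (r + k - 1)) * (s * y * (1 - x)) ^ k)"

lemma gdens_eq_fbeta_mult: "gdens n0 r y s x = fbeta n0 r x * gdens_factor n0 r y s x"
  unfolding gdens_def gdens_factor_def by simp

lemma gdens_zero_snr: "gdens n0 r y 0 x = fbeta n0 r x"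
proof -
  have "(\<Sum>k = 0..n0. real (n0 choose k) * (fact (r - 1) / fact (r + k - 1)) * (0 * y * (1 - x)) ^ k)
      = (\<Sum>k = 0..n0. if k = 0 then 1 else 0)"
    by (rule sum.cong) auto
  then show ?thesis unfolding gdens_def by simp
qed

lemma fbeta_pos: "0 < x \<Longrightarrow> x < 1 \<Longrightarrow> 0 < fbeta n r x"
  unfolding fbeta_def by (intro mult_pos_pos divide_pos_pos) auto

lemma fbeta_nonneg: "0 \<le> x \<Longrightarrow> x \<le> 1 \<Longrightarrow> 0 \<le> fbeta n r x"
  unfolding fbeta_def by (intro mult_nonneg_nonneg divide_nonneg_nonneg) auto

lemma gdens_factor_nonneg: "0 \<le> s \<Longrightarrow> 0 \<le> y \<Longrightarrow> x \<le> 1 \<Longrightarrow> 0 \<le> gdens_factor n0 r y s x"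
  unfolding gdens_factor_def
  by (intro mult_nonneg_nonneg sum_nonneg divide_nonneg_nonneg zero_le_power) auto

lemma gdens_factor_antimono:
  assumes "0 \<le> s" and "0 \<le> y"
  shows "antimono_on {..1} (gdens_factor n0 r y s)"
proof (rule monotone_onI)
  fix x x' :: real assume "x \<in> {..1}" "x' \<in> {..1}" "x \<le> x'"
  moreover have "s * x * y \<le> s * x' * y"
    using \<open>x \<le> x'\<close> assms by (intro mult_right_mono mult_left_mono) auto
  ultimately show "gdens_factor n0 r y s x' \<le> gdens_factor n0 r y s x"
    unfolding gdens_factor_def using assms
    by (intro mult_mono sum_mono mult_left_mono power_mono mult_nonneg_nonneg
        divide_nonneg_nonneg sum_nonneg zero_le_power) auto
qed

lemma gdens_ratio: "gdens n0 r y s x / gdens n0 r y 0 x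
    = (if fbeta n0 r x = 0 then 0 else gdens_factor n0 r y s x)"
  unfolding gdens_zero_snr gdens_eq_fbeta_mult[of n0 r y s x] by simp

lemma gdens_eq_ratio_mult:
  "gdens n0 r y s x = gdens n0 r y s x / gdens n0 r y 0 x * gdens n0 r y 0 x"
  unfolding gdens_zero_snr gdens_eq_fbeta_mult[of n0 r y s x] by simp

lemma gdens_ratio_bounds:
  assumes "0 \<le> s" and "0 \<le> y" and "x \<le> 1"
  shows "0 \<le> gdens n0 r y s x / gdens n0 r y 0 x"
    and "gdens n0 r y s x / gdens n0 r y 0 x \<le> gdens_factor n0 r y s x"
  using gdens_factor_nonneg[OF assms] by (simp_all add: gdens_ratio)

text \<open>At \<open>x = 1\<close> the beta density may vanish, and then the ratio is \<open>0 / 0 = 0\<close>;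
  this is harmless because \<open>1\<close> is the right end of the interval.\<close>

lemma gdens_ratio_antimono:
  assumes "0 \<le> s" and "0 \<le> y"
  shows "antimono_on {0<..1} (\<lambda>x. gdens n0 r y s x / gdens n0 r y 0 x)"
proof (rule monotone_onI)
  fix x x' :: real assume x: "x \<in> {0<..1}" and x': "x' \<in> {0<..1}" and "x \<le> x'"
  show "gdens n0 r y s x' / gdens n0 r y 0 x' \<le> gdens n0 r y s x / gdens n0 r y 0 x"
  proof (cases "x = x'")
    case False
    with x x' \<open>x \<le> x'\<close> have "0 < fbeta n0 r x" by (intro fbeta_pos) auto
    have "gdens n0 r y s x' / gdens n0 r y 0 x' \<le> gdens_factor n0 r y s x'"
      using gdens_ratio_bounds(2) assms x' by simp
    also have "\<dots> \<le> gdens_factor n0 r y s x"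
      using monotone_onD[OF gdens_factor_antimono[OF assms]] x x' \<open>x \<le> x'\<close> by simp
    also have "\<dots> = gdens n0 r y s x / gdens n0 r y 0 x"
      using \<open>0 < fbeta n0 r x\<close> by (simp add: gdens_ratio)
    finally show ?thesis .
  qed simp
qed

lemma gdens_ratio_bdd_above:
  assumes "0 \<le> s" and "0 \<le> y"
  shows "bdd_above ((\<lambda>x. gdens n0 r y s x / gdens n0 r y 0 x) ` {0<..1})"
proof (rule bdd_aboveI2)
  fix x :: real assume "x \<in> {0<..1}"
  then show "gdens n0 r y s x / gdens n0 r y 0 x \<le> gdens_factor n0 r y s 0"
    using gdens_ratio_bounds(2)[OF assms] monotone_onD[OF gdens_factor_antimono[OF assms]]
    by (meson atMost_iff greaterThanAtMost_iff less_le_not_le order_trans zero_less_one)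
qed

lemma gdens_continuous: "continuous_on UNIV (gdens n0 r y s)"
  unfolding gdens_def fbeta_def by (intro continuous_intros)

lemma set_integrable_gdens: "set_integrable lborel {0..1} (gdens n0 r y s)"
  unfolding set_integrable_def
  by (rule borel_integrable_compact) (auto intro: continuous_on_subset[OF gdens_continuous])

lemma set_integrable_bounded_mult_gdens:
  fixes \<phi> :: "real \<Rightarrow> real"
  assumes [measurable]: "\<phi> \<in> borel_measurable lborel" and "\<forall>x. \<bar>\<phi> x\<bar> \<le> 1"
    and [measurable]: "A \<in> sets lborel" and "A \<subseteq> {0..1}"
  shows "set_integrable lborel A (\<lambda>x. \<phi> x * gdens n0 r y s x)"
proof (rule set_integrable_bound)
  show "set_integrable lborel A (gdens n0 r y s)"
    using set_integrable_gdens assms(3,4) by (rule set_integrable_subset)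
  have [measurable]: "gdens n0 r y s \<in> borel_measurable lborel"
    using gdens_continuous by (simp add: borel_measurable_continuous_onI)
  show "set_borel_measurable lborel A (\<lambda>x. \<phi> x * gdens n0 r y s x)"
    unfolding set_borel_measurable_def by measurable
  show "AE x in lborel. x \<in> A \<longrightarrow> norm (\<phi> x * gdens n0 r y s x) \<le> norm (gdens n0 r y s x)"
    using assms(2) by (intro AE_I2) (simp add: abs_mult mult_left_le_one_le)
qed

text \<open>Only \<open>0 < y\<close> is used: the constraints on \<open>N\<close>, \<open>t\<close>, \<open>r\<close>, \<open>K\<close> only make
  \<open>n0\<close> the parameter of the detection problem.\<close>

theorem mainTheorem7:
  fixes N t r K :: nat and y :: real
  assumes "N \<ge> 2" and "t \<ge> 1" and "r \<ge> 1" and "t + r < N" and "K \<ge> N"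
    and "0 < y" and "y \<le> 1"
  defines "n0 \<equiv> K - (N - t) + 1"
  shows "(\<forall>s>0. antimono_on {0<..1} (\<lambda>x. gdens n0 r y s x / gdens n0 r y 0 x))
    \<and> (\<forall>\<eta>::real. \<forall>\<phi>::real \<Rightarrow> real.
          \<phi> \<in> borel_measurable lborel \<and> (\<forall>x. 0 \<le> \<phi> x \<and> \<phi> x \<le> 1) \<and>
          (LBINT x:{0<..1}. \<phi> x * gdens n0 r y 0 x) \<le> (LBINT x:{0<..<\<eta>} \<inter> {0<..1}. gdens n0 r y 0 x)
          \<longrightarrow> (\<forall>s>0. (LBINT x:{0<..1}. \<phi> x * gdens n0 r y s x)
                        \<le> (LBINT x:{0<..<\<eta>} \<inter> {0<..1}. gdens n0 r y s x)))"
proof (intro conjI allI impI)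
  show "antimono_on {0<..1} (\<lambda>x. gdens n0 r y s x / gdens n0 r y 0 x)" if "s > 0" for s
    using that \<open>0 < y\<close> by (simp add: gdens_ratio_antimono)
next
  fix \<eta> :: real and \<phi> :: "real \<Rightarrow> real" and s :: real
  assume "\<phi> \<in> borel_measurable lborel \<and> (\<forall>x. 0 \<le> \<phi> x \<and> \<phi> x \<le> 1) \<and>
      (LBINT x:{0<..1}. \<phi> x * gdens n0 r y 0 x) \<le> (LBINT x:{0<..<\<eta>} \<inter> {0<..1}. gdens n0 r y 0 x)"
    and "s > 0"
  moreover have region: "{0<..<\<eta>} \<inter> {0<..1} = {0<..1::real} \<inter> {..<\<eta>}" by auto
  ultimately have \<phi>: "\<phi> \<in> borel_measurable lborel" "\<forall>x. \<bar>\<phi> x\<bar> \<le> 1" "\<forall>x\<in>{0<..1}. 0 \<le> \<phi> x \<and> \<phi> x \<le> 1"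
    and size: "(LBINT x:{0<..1}. \<phi> x * gdens n0 r y 0 x) \<le> (LBINT x:{0<..1} \<inter> {..<\<eta>}. gdens n0 r y 0 x)"
    by auto
  have integrable_region: "set_integrable lborel ({0<..1} \<inter> {..<\<eta>}) (gdens n0 r y s')" for s'
    by (rule set_integrable_subset[OF set_integrable_gdens]) auto
  have integrable_test: "set_integrable lborel {0<..1} (\<lambda>x. \<phi> x * gdens n0 r y s' x)" for s'
    using \<phi>(1,2) by (intro set_integrable_bounded_mult_gdens) auto
  have null_density_nonneg: "0 \<le> gdens n0 r y 0 x" if "x \<in> {0<..1}" for x
    using that by (simp add: gdens_zero_snr fbeta_nonneg)
  have "(LBINT x:{0<..1}. \<phi> x * gdens n0 r y s x) \<le> (LBINT x:{0<..1} \<inter> {..<\<eta>}. gdens n0 r y s x)"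
  proof (rule antimono_likelihood_ratio_threshold_test_most_powerful)
    show "antimono_on {0<..1} (\<lambda>x. gdens n0 r y s x / gdens n0 r y 0 x)"
      using \<open>s > 0\<close> \<open>0 < y\<close> by (simp add: gdens_ratio_antimono)
    show "bdd_above ((\<lambda>x. gdens n0 r y s x / gdens n0 r y 0 x) ` {0<..1})"
      using \<open>s > 0\<close> \<open>0 < y\<close> by (simp add: gdens_ratio_bdd_above)
    show "\<forall>x\<in>{0<..1}. gdens n0 r y s x = gdens n0 r y s x / gdens n0 r y 0 x * gdens n0 r y 0 x"
      using gdens_eq_ratio_mult by blast
  qed (use \<open>s > 0\<close> \<open>0 < y\<close> \<phi>(3) size integrable_region integrable_test null_density_nonneg in
       \<open>auto simp: gdens_ratio_bounds(1)\<close>)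
  then show "(LBINT x:{0<..1}. \<phi> x * gdens n0 r y s x) \<le> (LBINT x:{0<..<\<eta>} \<inter> {0<..1}. gdens n0 r y s x)"
    unfolding region .
qed

end
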